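(* (a) The set of pairs $(z,d)\in\omega^\omega\times\mathbb{R}^{\omega\times\omega}$ such that $d$ is a metric on $\omega$ and $z$ is a Cauchy sequence in $\langle\omega,d\rangle$ is $\boldsymbol{\Pi}^0_3$. (b) The set of triples $(g,d,d')\in\omega^\omega\times(\mathbb{R}^{\omega\times\omega})^2$ such that $d,d'$ are metrics on $\omega$ and $g:\langle\omega,d\rangle\to\langle\omega,d'\rangle$ is continuous is $\boldsymbol{\Pi}^0_3$. (c) $\mathcal{C}(\omega)$ is $\boldsymbol{\Pi}^1_1$ in $\omega^\omega\times(\mathbb{R}^{\omega\times\omega})^2$. (d) The relation $\preceq_{\mathrm{cdi}}$ on $\mathcal{C}(\omega)$, viewed as a subset of $(\omega^\omega)^2\times(\mathbb{R}^{\omega\times\omega})^4$, is the intersection of a $\boldsymbol{\Sigma}^1_1$ set and a $\boldsymbol{\Pi}^1_1$ set. (e) The relation $\approx_{\mathrm{cdi}}$ on $\mathcal{C}(\omega)$, viewed as a subset of $(\omega^\omega)^2\times(\mathbb{R}^{\omega\times\omega})^4$, is the intersection of a $\boldsymbol{\Sigma}^1_1$ set and a $\boldsymbol{\Pi}^1_1$ set.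
   Context: Metrics on $\omega$ are viewed as elements of $\mathbb{R}^{\omega\times\omega}$; functions $\omega\to\omega$ and sequences in $\omega$ are elements of $\omega^\omega$. A dense isometry is a distance-preserving map (not necessarily onto) with dense image. A function between metric spaces is Cauchy-continuous if it maps Cauchy sequences to Cauchy sequences. $\mathcal{C}(\omega)$ is the set of triples $(g,d,d')$ where $d,d'$ are metrics on $\omega$ and $g:\langle\omega,d\rangle\to\langle\omega,d'\rangle$ is Cauchy-continuous. On $\mathcal{C}(\omega)$: $(g_0,d_0,d'_0)\preceq_{\mathrm{cdi}}(g_1,d_1,d'_1)$ iff there are dense isometries $\iota:\langle\omega,d_0\rangle\to\langle\omega,d_1\rangle$ and $\iota':\langle\omega,d'_0\rangle\to\langle\omega,d'_1\rangle$ with $\iota'\circ g_0=g_1\circ\iota$; and $(g_0,d_0,d'_0)\approx_{\mathrm{cdi}}(g_1,d_1,d'_1)$ iff there is $(g,d,d')\in\mathcal{C}(\omega)$ with $(g_e,d_e,d'_e)\preceq_{\mathrm{cdi}}(g,d,d')$ for each $e\in\{0,1\}$. *)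

theory Defs
  imports "HOL-Analysis.Analysis"
begin

type_synonym nseq = "nat \<Rightarrow> nat"
type_synonym nmat = "nat \<times> nat \<Rightarrow> real"

fun Borel_Sigma :: "nat \<Rightarrow> 'a::topological_space set set" where
  "Borel_Sigma 0 = {}"
| "Borel_Sigma (Suc 0) = {S. open S}"
| "Borel_Sigma (Suc (Suc n)) =
     {(\<Union>i. A i) | A :: nat \<Rightarrow> 'a set. \<forall>i. - A i \<in> Borel_Sigma (Suc n)}"

definition Borel_Pi :: "nat \<Rightarrow> 'a::topological_space set set" where
  "Borel_Pi n = {S. - S \<in> Borel_Sigma n}"

definition Sigma11 :: "'a::topological_space set set" where
  "Sigma11 = {fst ` C | C :: ('a \<times> (nat \<Rightarrow> nat)) set. closed C}"

definition Pi11 :: "'a::topological_space set set" where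
  "Pi11 = {S. - S \<in> Sigma11}"

definition metric_on_nat :: "nmat \<Rightarrow> bool" where
  "metric_on_nat d \<longleftrightarrow>
     (\<forall>x y. 0 \<le> d (x, y)) \<and> (\<forall>x y. d (x, y) = 0 \<longleftrightarrow> x = y) \<and>
     (\<forall>x y. d (x, y) = d (y, x)) \<and> (\<forall>x y z. d (x, z) \<le> d (x, y) + d (y, z))"

definition cauchy_in :: "nmat \<Rightarrow> nseq \<Rightarrow> bool" where
  "cauchy_in d z \<longleftrightarrow> (\<forall>e>0. \<exists>N. \<forall>m\<ge>N. \<forall>n\<ge>N. d (z m, z n) < e)"

definition continuous_wrt :: "nmat \<Rightarrow> nmat \<Rightarrow> nseq \<Rightarrow> bool" where
  "continuous_wrt d d' g \<longleftrightarrow>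
     (\<forall>x. \<forall>e>0. \<exists>\<delta>>0. \<forall>y. d (x, y) < \<delta> \<longrightarrow> d' (g x, g y) < e)"

definition cauchy_continuous_wrt :: "nmat \<Rightarrow> nmat \<Rightarrow> nseq \<Rightarrow> bool" where
  "cauchy_continuous_wrt d d' g \<longleftrightarrow> (\<forall>z. cauchy_in d z \<longrightarrow> cauchy_in d' (g \<circ> z))"

definition dense_isometry :: "nmat \<Rightarrow> nmat \<Rightarrow> nseq \<Rightarrow> bool" where
  "dense_isometry d0 d1 \<iota> \<longleftrightarrow>
     (\<forall>x y. d1 (\<iota> x, \<iota> y) = d0 (x, y)) \<and> (\<forall>y. \<forall>e>0. \<exists>x. d1 (\<iota> x, y) < e)"

definition C_omega :: "(nseq \<times> nmat \<times> nmat) set" where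
  "C_omega = {(g, d, d'). metric_on_nat d \<and> metric_on_nat d' \<and> cauchy_continuous_wrt d d' g}"

definition cdi_le :: "nseq \<times> nmat \<times> nmat \<Rightarrow> nseq \<times> nmat \<times> nmat \<Rightarrow> bool" where
  "cdi_le p q \<longleftrightarrow> p \<in> C_omega \<and> q \<in> C_omega \<and>
     (case p of (g0, d0, d0') \<Rightarrow> case q of (g1, d1, d1') \<Rightarrow>
        (\<exists>\<iota> \<iota>'. dense_isometry d0 d1 \<iota> \<and> dense_isometry d0' d1' \<iota>' \<and> \<iota>' \<circ> g0 = g1 \<circ> \<iota>))"

definition cdi_approx :: "nseq \<times> nmat \<times> nmat \<Rightarrow> nseq \<times> nmat \<times> nmat \<Rightarrow> bool" where
  "cdi_approx p q \<longleftrightarrow> p \<in> C_omega \<and> q \<in> C_omega \<and>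
     (\<exists>r\<in>C_omega. cdi_le p r \<and> cdi_le q r)"

definition rel_set :: "(nseq \<times> nmat \<times> nmat \<Rightarrow> nseq \<times> nmat \<times> nmat \<Rightarrow> bool)
    \<Rightarrow> ((nseq \<times> nseq) \<times> (nmat \<times> nmat \<times> nmat \<times> nmat)) set" where
  "rel_set R = {((g0, g1), (d0, d0', d1, d1')). R (g0, d0, d0') (g1, d1, d1')}"

end

theory Submission
  imports Defs
begin

(* All sets in (a) and (b) are F_sigma_delta, hence Pi^0_3: with epsilon and delta ranging over
   1/(k+1), Cauchyness of z and continuity of g are countable forall-exists-forall combinations
   of closed conditions on the reals d(z m, z n) and d'(g a, g b), which depend continuously on
   the point of the product space.  Since all spaces involved are metrizable, such sets and their
   complements are analytic, and analytic sets are closed under countable unions and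
   intersections, continuous preimages and projections along continuous images of Baire space;
   this covers R^(omega x omega) and omega^omega.
   (c) A triple is outside C(omega) iff d or d' is not a metric or some d-Cauchy sequence is
   not mapped to a d'-Cauchy one: a finite union of analytic sets.
   (d) g0 <=cdi g1 says that both triples lie in C(omega) and that a pair of dense isometries
   with a commuting square exists, the projection of a Pi^0_3 set.
   (e) The common upper bound (g, d, d') must lie in C(omega), a co-analytic condition.  But if
   the Cauchy continuous g0 is embedded into g by dense isometries, Cauchy continuity of g is
   equivalent to a Borel condition: every point is approximated by the image of the embedding
   simultaneously in d and, after applying g, in d'. *)

section \<open>Discrete and function spaces\<close>

text \<open>The library topologizes \<^typ>\<open>nat\<close> only through its order.  This metric induces the same
  discrete topology and makes \<^typ>\<open>nseq\<close>, \<^typ>\<open>nmat\<close> and their finite products metric spaces.\<close>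
instantiation nat :: metric_space
begin

definition dist_nat :: "nat \<Rightarrow> nat \<Rightarrow> real" where
  "dist_nat m n = \<bar>real m - real n\<bar>"

definition uniformity_nat :: "(nat \<times> nat) filter" where
  "uniformity_nat = (INF e\<in>{0 <..}. principal {(x, y). dist x y < e})"

instance
proof
  fix U :: "nat set"
  have close: "m = n" if "\<bar>real m - real n\<bar> < 1" for m n :: nat
    using that by (simp add: abs_less_iff)
  have "eventually (\<lambda>(x', y). x' = x \<longrightarrow> y \<in> U) uniformity" if "x \<in> U" for x
  proof -
    have "eventually (\<lambda>(x', y). x' = x \<longrightarrow> y \<in> U) (principal {(x, y). dist x y < (1::real)})"
      using that close by (auto simp: eventually_principal dist_nat_def)
    then show ?thesis unfolding uniformity_nat_def by (intro eventually_INF1[of 1]) auto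
  qed
  then show "open U \<longleftrightarrow> (\<forall>x\<in>U. eventually (\<lambda>(x', y). x' = x \<longrightarrow> y \<in> U) uniformity)"
    by (simp add: open_discrete)
qed (auto simp: uniformity_nat_def dist_nat_def)

end

instance prod :: (discrete_topology, discrete_topology) discrete_topology
proof
  fix A :: "('a \<times> 'b) set"
  have "A = (\<Union>p\<in>A. {fst p} \<times> {snd p})" by auto
  also have "open \<dots>" by (intro open_UN ballI open_Times open_discrete)
  finally show "open A" .
qed

lemma continuous_on_apply_discrete:
  fixes f :: "'a::topological_space \<Rightarrow> 'i::discrete_topology \<Rightarrow> 'b::topological_space"
  assumes f: "continuous_on S f" and h: "continuous_on S h"
  shows "continuous_on S (\<lambda>x. f x (h x))"
  unfolding continuous_on_def
proof
  fix x assume "x \<in> S"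
  have "((\<lambda>y. f y (h x)) \<longlongrightarrow> f x (h x)) (at x within S)"
    using continuous_on_product_then_coordinatewise[OF f] \<open>x \<in> S\<close> by (simp add: continuous_on_def)
  moreover have "\<forall>\<^sub>F y in at x within S. h y = h x"
    using h \<open>x \<in> S\<close> by (simp add: continuous_on_def tendsto_discrete)
  then have "\<forall>\<^sub>F y in at x within S. f y (h x) = f y (h y)"
    by (rule eventually_mono) simp
  ultimately show "((\<lambda>y. f y (h y)) \<longlongrightarrow> f x (h x)) (at x within S)"
    by (simp add: tendsto_cong)
qed

lemma continuous_on_precompose [continuous_intros]:
  fixes f :: "'a::topological_space \<Rightarrow> 'i \<Rightarrow> 'b::topological_space"
  shows "continuous_on S f \<Longrightarrow> continuous_on S (\<lambda>x. f x \<circ> h)"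
  unfolding comp_def
  by (rule continuous_on_coordinatewise_then_product, rule continuous_on_product_then_coordinatewise)

lemma continuous_on_comp_discrete:
  fixes F :: "'a::topological_space \<Rightarrow> 'j::discrete_topology \<Rightarrow> 'b::topological_space"
    and G :: "'a \<Rightarrow> 'i \<Rightarrow> 'j"
  assumes "continuous_on S F" and "continuous_on S G"
  shows "continuous_on S (\<lambda>x. F x \<circ> G x)"
  unfolding comp_def
  by (rule continuous_on_coordinatewise_then_product, rule continuous_on_apply_discrete)
    (use assms continuous_on_product_then_coordinatewise in auto)

section \<open>Analytic sets\<close>

lemma mem_fst_image_iff: "x \<in> fst ` E \<longleftrightarrow> (\<exists>y. (x, y) \<in> E)"
  by force

lemma Sigma11_closed: "closed S \<Longrightarrow> S \<in> Sigma11"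
  unfolding Sigma11_def by (intro CollectI exI[of _ "S \<times> (UNIV :: nseq set)"]) (auto simp: closed_Times)

lemma Sigma11_iff: "S \<in> Sigma11 \<longleftrightarrow> (\<exists>C :: (_ \<times> nseq) set. closed C \<and> S = fst ` C)"
  unfolding Sigma11_def by blast

lemma Sigma11_vimage:
  assumes f: "continuous_on UNIV f" and S: "S \<in> Sigma11"
  shows "f -` S \<in> Sigma11"
proof -
  obtain C :: "(_ \<times> nseq) set" where C: "closed C" "S = fst ` C"
    using S unfolding Sigma11_iff by blast
  let ?g = "\<lambda>p. (f (fst p), snd p)"
  have "closed (?g -` C)"
    by (intro closed_vimage C(1) continuous_intros continuous_on_compose2[OF f]) auto
  moreover have "f -` S = fst ` (?g -` C)"
    unfolding C(2) by (simp add: set_eq_iff mem_fst_image_iff)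
  ultimately show ?thesis unfolding Sigma11_iff by blast
qed

lemma Sigma11_INT:
  fixes A :: "nat \<Rightarrow> 'a::topological_space set"
  assumes "\<And>i. A i \<in> Sigma11"
  shows "(\<Inter>i. A i) \<in> Sigma11"
proof -
  obtain C :: "nat \<Rightarrow> ('a \<times> nseq) set" where C: "\<And>i. closed (C i)" "\<And>i. A i = fst ` C i"
    using assms unfolding Sigma11_iff by metis
  \<comment> \<open>the witnesses for all \<open>A i\<close> are interleaved into one sequence\<close>
  define D where "D = (\<Inter>i. (\<lambda>p. (fst p, snd p \<circ> (\<lambda>n. prod_encode (i, n)))) -` C i)"
  have "closed D"
    unfolding D_def by (intro closed_INT ballI closed_vimage C(1) continuous_intros)
  moreover have "fst ` D = (\<Inter>i. A i)"
  proof
    show "fst ` D \<subseteq> (\<Inter>i. A i)" by (auto simp: D_def C(2) mem_fst_image_iff) blast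
    show "(\<Inter>i. A i) \<subseteq> fst ` D"
    proof
      fix x assume "x \<in> (\<Inter>i. A i)"
      then have "\<forall>i. \<exists>v. (x, v) \<in> C i" by (simp add: C(2) mem_fst_image_iff)
      then obtain u where u: "\<And>i. (x, u i) \<in> C i" by metis
      have "(x, \<lambda>m. case prod_decode m of (i, n) \<Rightarrow> u i n) \<in> D"
        unfolding D_def using u by (simp add: comp_def)
      then show "x \<in> fst ` D" by (auto simp: mem_fst_image_iff)
    qed
  qed
  ultimately show ?thesis unfolding Sigma11_iff by blast
qed

class baire_image = topological_space +
  assumes baire_parametrization: "\<exists>\<tau> :: nseq \<Rightarrow> 'a. (\<forall>U. open U \<longrightarrow> open (\<tau> -` U)) \<and> surj \<tau>"

lemma baire_parametrizationI:
  fixes \<tau> :: "nseq \<Rightarrow> 'a::topological_space"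
  assumes "continuous_on UNIV \<tau>" and "surj \<tau>"
  shows "\<exists>\<tau> :: nseq \<Rightarrow> 'a. (\<forall>U. open U \<longrightarrow> open (\<tau> -` U)) \<and> surj \<tau>"
  using assms by (intro exI[of _ \<tau>]) (simp add: continuous_on_open_vimage)

lemma ex_continuous_surj_from_baire:
  "\<exists>\<tau> :: nseq \<Rightarrow> 'a::baire_image. continuous_on UNIV \<tau> \<and> surj \<tau>"
  using baire_parametrization by (auto simp: continuous_on_open_vimage)

lemma Sigma11_fst_image:
  fixes S :: "('a::topological_space \<times> 'b::baire_image) set"
  assumes "S \<in> Sigma11"
  shows "fst ` S \<in> Sigma11"
proof -
  obtain \<tau> :: "nseq \<Rightarrow> 'b" where \<tau>: "continuous_on UNIV \<tau>" "surj \<tau>"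
    using ex_continuous_surj_from_baire by blast
  obtain C :: "(('a \<times> 'b) \<times> nseq) set" where C: "closed C" "S = fst ` C"
    using assms unfolding Sigma11_iff by blast
  \<comment> \<open>even entries of the new witness encode the second coordinate, odd entries the old witness\<close>
  define D where "D = (\<lambda>p. ((fst p, \<tau> (snd p \<circ> (\<lambda>n. 2 * n))), snd p \<circ> (\<lambda>n. 2 * n + 1))) -` C"
  have "closed D"
    unfolding D_def
    by (intro closed_vimage C(1) continuous_intros continuous_on_compose2[OF \<tau>(1)]) auto
  moreover have "fst ` D = fst ` S"
  proof
    show "fst ` D \<subseteq> fst ` S" by (auto simp: D_def C(2) mem_fst_image_iff) blast
    show "fst ` S \<subseteq> fst ` D"
    proof
      fix x assume "x \<in> fst ` S"
      then obtain y u where "((x, y), u) \<in> C" by (auto simp: C(2) mem_fst_image_iff)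
      moreover obtain v where "\<tau> v = y" using \<tau>(2) by (metis surjD)
      ultimately have "(x, \<lambda>n. if even n then v (n div 2) else u (n div 2)) \<in> D"
        by (simp add: D_def comp_def)
      then show "x \<in> fst ` D" by (auto simp: mem_fst_image_iff)
    qed
  qed
  ultimately show ?thesis unfolding Sigma11_iff by blast
qed

lemma Sigma11_indexed_family:
  fixes A :: "'i::discrete_topology \<Rightarrow> 'a::topological_space set"
  assumes "\<And>i. A i \<in> Sigma11"
  shows "{(x, i). x \<in> A i} \<in> Sigma11"
proof -
  obtain C :: "'i \<Rightarrow> ('a \<times> nseq) set" where C: "\<And>i. closed (C i)" "\<And>i. A i = fst ` C i"
    using assms unfolding Sigma11_iff by metis
  define D where "D = {((x, i), w). (x, w) \<in> C i}"
  have "- D = (\<Union>i. (\<lambda>p. snd (fst p)) -` {i} \<inter> (\<lambda>p. (fst (fst p), snd p)) -` (- C i))"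
    by (auto simp: D_def)
  also have "open \<dots>"
    by (intro open_UN ballI open_Int open_vimage open_discrete continuous_intros)
      (use C(1) in auto)
  finally have "closed D" by (simp add: closed_open)
  moreover have "fst ` D = {(x, i). x \<in> A i}"
    by (simp add: set_eq_iff split_paired_All D_def C(2) mem_fst_image_iff)
  ultimately show ?thesis unfolding Sigma11_iff by (intro exI[of _ D]) simp
qed

lemma Sigma11_UN:
  fixes A :: "'i::{discrete_topology, baire_image} \<Rightarrow> 'a::topological_space set"
  assumes "\<And>i. A i \<in> Sigma11"
  shows "(\<Union>i. A i) \<in> Sigma11"
proof -
  have "(\<Union>i. A i) = fst ` {(x, i). x \<in> A i}" by (auto simp: image_iff)
  also have "\<dots> \<in> Sigma11" by (intro Sigma11_fst_image Sigma11_indexed_family assms)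
  finally show ?thesis .
qed

instance nat :: baire_image
proof (standard, rule baire_parametrizationI)
  show "continuous_on UNIV (\<lambda>w :: nseq. w 0)"
    by (rule continuous_on_product_then_coordinatewise[OF continuous_on_id])
  show "surj (\<lambda>w :: nseq. w 0)"
    by (rule surjI[of _ "\<lambda>n _. n"]) simp
qed

lemma Sigma11_Union:
  assumes "countable T" and "T \<subseteq> Sigma11"
  shows "\<Union>T \<in> Sigma11"
proof (cases "T = {}")
  case True
  then show ?thesis by (simp add: Sigma11_closed)
next
  case False
  then have "\<Union>T = (\<Union>n :: nat. from_nat_into T n)" by (simp add: assms(1) range_from_nat_into)
  also have "\<dots> \<in> Sigma11" using False assms by (intro Sigma11_UN) (auto intro: from_nat_into)
  finally show ?thesis .
qed

lemma Sigma11_Inter: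
  assumes "countable T" and "T \<subseteq> Sigma11"
  shows "\<Inter>T \<in> Sigma11"
proof (cases "T = {}")
  case True
  then show ?thesis by (simp add: Sigma11_closed)
next
  case False
  then have "\<Inter>T = (\<Inter>n. from_nat_into T n)" by (simp add: assms(1) range_from_nat_into)
  also have "\<dots> \<in> Sigma11" using False assms by (intro Sigma11_INT) (auto intro: from_nat_into)
  finally show ?thesis .
qed

lemma Sigma11_Un: "A \<in> Sigma11 \<Longrightarrow> B \<in> Sigma11 \<Longrightarrow> A \<union> B \<in> Sigma11"
  using Sigma11_Union[of "{A, B}"] by simp

lemma Sigma11_Int: "A \<in> Sigma11 \<Longrightarrow> B \<in> Sigma11 \<Longrightarrow> A \<inter> B \<in> Sigma11"
  using Sigma11_Inter[of "{A, B}"] by simp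

instance prod :: (baire_image, baire_image) baire_image
proof
  obtain \<sigma> :: "nseq \<Rightarrow> 'a" and \<tau> :: "nseq \<Rightarrow> 'b"
    where \<sigma>: "continuous_on UNIV \<sigma>" "surj \<sigma>" and \<tau>: "continuous_on UNIV \<tau>" "surj \<tau>"
    using ex_continuous_surj_from_baire by metis
  define F where "F w = (\<sigma> (w \<circ> (\<lambda>n. 2 * n)), \<tau> (w \<circ> (\<lambda>n. 2 * n + 1)))" for w
  have "continuous_on UNIV F"
    unfolding F_def
    by (intro continuous_intros continuous_on_compose2[OF \<sigma>(1)] continuous_on_compose2[OF \<tau>(1)]) auto
  moreover have "surj F"
    unfolding surj_def
  proof
    fix y :: "'a \<times> 'b"
    obtain u v where "\<sigma> u = fst y" "\<tau> v = snd y"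
      using \<sigma>(2) \<tau>(2) by (metis surjD)
    then show "\<exists>w. y = F w"
      by (intro exI[of _ "\<lambda>n. if even n then u (n div 2) else v (n div 2)"]) (simp add: F_def comp_def)
  qed
  ultimately show "\<exists>\<tau> :: nseq \<Rightarrow> 'a \<times> 'b. (\<forall>U. open U \<longrightarrow> open (\<tau> -` U)) \<and> surj \<tau>"
    by (rule baire_parametrizationI)
qed

instance "fun" :: (countable, baire_image) baire_image
proof
  obtain \<tau> :: "nseq \<Rightarrow> 'b" where \<tau>: "continuous_on UNIV \<tau>" "surj \<tau>"
    using ex_continuous_surj_from_baire by metis
  define F :: "nseq \<Rightarrow> 'a \<Rightarrow> 'b" where "F w = (\<lambda>i. \<tau> (w \<circ> (\<lambda>n. prod_encode (to_nat i, n))))" for w :: nseq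
  have "continuous_on UNIV F"
    unfolding F_def
    by (rule continuous_on_coordinatewise_then_product, rule continuous_on_compose2[OF \<tau>(1)])
      (auto intro: continuous_intros)
  moreover have "surj F"
    unfolding surj_def
  proof
    fix y :: "'a \<Rightarrow> 'b"
    have "\<forall>i. \<exists>a. \<tau> a = y i" using \<tau>(2) by (metis surjD)
    then obtain a where "\<And>i. \<tau> (a i) = y i" by metis
    then show "\<exists>w. y = F w"
      by (intro exI[of _ "\<lambda>m. case prod_decode m of (k, n) \<Rightarrow> a (from_nat k) n"])
        (simp add: F_def comp_def)
  qed
  ultimately show "\<exists>\<tau> :: nseq \<Rightarrow> 'a \<Rightarrow> 'b. (\<forall>U. open U \<longrightarrow> open (\<tau> -` U)) \<and> surj \<tau>"
    by (rule baire_parametrizationI)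
qed

lemma binary_digits_partial_sum:
  fixes x :: real
  assumes "0 \<le> x" and "x < 1"
  shows "(\<Sum>n<N. of_int (\<lfloor>2 ^ Suc n * x\<rfloor> mod 2) / 2 ^ Suc n) = (of_int \<lfloor>2 ^ N * x\<rfloor> / 2 ^ N :: real)"
proof (induction N)
  case 0
  have "\<lfloor>x\<rfloor> = 0" using assms by (simp add: floor_eq_iff)
  then show ?case by simp
next
  case (Suc N)
  define m where "m = \<lfloor>2 ^ Suc N * x\<rfloor>"
  have "\<lfloor>2 ^ N * x\<rfloor> = m div 2"
    using floor_divide_real_eq_div[of 2 "2 ^ Suc N * x"] by (simp add: m_def)
  then have "of_int m = 2 * of_int \<lfloor>2 ^ N * x\<rfloor> + (of_int (m mod 2) :: real)"
    by (metis div_mult_mod_eq mult.commute of_int_add of_int_mult of_int_numeral)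
  with Suc.IH show ?case
    by (simp add: m_def field_simps)
qed

lemma binary_digits_sums:
  fixes x :: real
  assumes "0 \<le> x" and "x < 1"
  shows "(\<lambda>n. of_int (\<lfloor>2 ^ Suc n * x\<rfloor> mod 2) / 2 ^ Suc n) sums x"
  unfolding sums_def binary_digits_partial_sum[OF assms]
proof (rule real_tendsto_sandwich[of "\<lambda>N. x - (1/2) ^ N" _ _ "\<lambda>_. x"])
  have "x - (1/2) ^ N \<le> of_int \<lfloor>2 ^ N * x\<rfloor> / 2 ^ N" for N :: nat
  proof -
    have "x - (1/2) ^ N = (2 ^ N * x - 1) / 2 ^ N" by (simp add: field_simps power_divide)
    also have "\<dots> \<le> of_int \<lfloor>2 ^ N * x\<rfloor> / 2 ^ N" by (intro divide_right_mono) (linarith, simp)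
    finally show ?thesis .
  qed
  then show "\<forall>\<^sub>F N in sequentially. x - (1/2) ^ N \<le> of_int \<lfloor>2 ^ N * x\<rfloor> / 2 ^ N" by simp
  have "of_int \<lfloor>2 ^ N * x\<rfloor> / 2 ^ N \<le> x" for N :: nat
    by (simp add: field_simps)
  then show "\<forall>\<^sub>F N in sequentially. of_int \<lfloor>2 ^ N * x\<rfloor> / 2 ^ N \<le> x" by simp
  show "(\<lambda>N. x - (1/2) ^ N) \<longlonglongrightarrow> x"
    using tendsto_diff[OF tendsto_const LIMSEQ_power_zero[of "1/2 :: real"]] by simp
qed simp

definition real_of_baire :: "nseq \<Rightarrow> real" where
  "real_of_baire w = of_int (int_decode (w 0)) + (\<Sum>n. real (w (Suc n) mod 2) / 2 ^ Suc n)"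

lemma continuous_on_real_of_baire: "continuous_on UNIV real_of_baire"
proof -
  let ?f = "\<lambda>n (w :: nseq). real (w (Suc n) mod 2) / 2 ^ Suc n"
  have uniform: "uniform_limit UNIV (\<lambda>N w. \<Sum>n<N. ?f n w) (\<lambda>w. \<Sum>n. ?f n w) sequentially"
  proof (rule Weierstrass_m_test)
    show "norm (?f n w) \<le> (1/2) ^ Suc n" for n w
    proof -
      have "w (Suc n) mod 2 \<le> 1" by presburger
      then show ?thesis by (simp add: power_divide divide_right_mono)
    qed
    show "summable (\<lambda>n. (1/2 :: real) ^ Suc n)"
      using summable_geometric[of "1/2 :: real"] by (simp add: summable_Suc_iff)
  qed
  moreover have "continuous_on UNIV (\<lambda>w. \<Sum>n<N. ?f n w)" for N
  proof (intro continuous_on_sum)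
    fix n
    show "continuous_on UNIV (?f n)"
      using continuous_on_product_then_coordinatewise[OF continuous_on_id, where i = "Suc n"]
      by (intro continuous_on_compose2[of UNIV "\<lambda>k. real (k mod 2) / 2 ^ Suc n" _ "\<lambda>w. w (Suc n)"])
      (auto intro: continuous_on_discrete)
  qed
  ultimately have "continuous_on UNIV (\<lambda>w. \<Sum>n. ?f n w)"
    by (intro uniform_limit_theorem[OF always_eventually[OF allI] uniform]) auto
  moreover have "continuous_on UNIV (\<lambda>w :: nseq. of_int (int_decode (w 0)) :: real)"
    using continuous_on_product_then_coordinatewise[OF continuous_on_id, where i = 0]
    by (intro continuous_on_compose2[of UNIV "\<lambda>k. of_int (int_decode k) :: real" _ "\<lambda>w. w 0"])
      (auto intro: continuous_on_discrete)
  ultimately show ?thesis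
    unfolding real_of_baire_def by (intro continuous_on_add)
qed

lemma surj_real_of_baire: "surj real_of_baire"
  unfolding surj_def
proof
  fix t :: real
  define x where "x = t - of_int \<lfloor>t\<rfloor>"
  have "0 \<le> x" "x < 1" unfolding x_def by linarith+
  define w where
    "w n = (case n of 0 \<Rightarrow> int_encode \<lfloor>t\<rfloor> | Suc n \<Rightarrow> nat (\<lfloor>2 ^ Suc n * x\<rfloor> mod 2))" for n
  have "real (w (Suc n) mod 2) = of_int (\<lfloor>2 ^ Suc n * x\<rfloor> mod 2)" for n
    by (simp add: w_def)
  then have "(\<Sum>n. real (w (Suc n) mod 2) / 2 ^ Suc n) = x"
    using sums_unique[OF binary_digits_sums[OF \<open>0 \<le> x\<close> \<open>x < 1\<close>]] by simp
  then show "\<exists>w. t = real_of_baire w"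
    by (intro exI[of _ w]) (simp add: real_of_baire_def w_def x_def)
qed

instance real :: baire_image
  by standard (rule baire_parametrizationI[OF continuous_on_real_of_baire surj_real_of_baire])

section \<open>\<open>F\<^sub>\<sigma>\<^sub>\<delta>\<close> sets\<close>

abbreviation fsigma_delta :: "'a::topological_space set \<Rightarrow> bool" where
  "fsigma_delta \<equiv> countable intersection_of fsigma_in euclidean"

lemma fsigma_in_euclidean_iff:
  "fsigma_in euclidean S \<longleftrightarrow> (\<exists>C. (\<forall>n::nat. closed (C n)) \<and> S = (\<Union>n. C n))"
  unfolding fsigma_in_def closed_closedin
  by (subst countable_union_of_explicit) auto

lemma Borel_Sigma_2_if_fsigma:
  assumes "fsigma_in euclidean T"
  shows "T \<in> Borel_Sigma 2"
proof -
  obtain C where "\<And>n::nat. closed (C n)" "T = (\<Union>n. C n)"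
    using assms unfolding fsigma_in_euclidean_iff by blast
  then have "T \<in> Borel_Sigma (Suc (Suc 0))"
    unfolding Borel_Sigma.simps by (auto simp: closed_def)
  then show ?thesis by (simp add: numeral_2_eq_2)
qed

lemma Borel_Pi_3_if_fsigma_delta:
  assumes "fsigma_delta S"
  shows "S \<in> Borel_Pi 3"
proof -
  have "(countable union_of (\<lambda>T. fsigma_in euclidean (- T))) (- S)"
    using assms by (simp add: countable_intersection_of_complement)
  then obtain T where T: "\<And>n::nat. fsigma_in euclidean (- T n)" "- S = (\<Union>n. T n)"
    using fsigma_in_topspace[of euclidean] by (subst (asm) countable_union_of_explicit) auto
  have "- (T n) \<in> Borel_Sigma 2" for n
    using T(1) by (rule Borel_Sigma_2_if_fsigma)
  then have "\<forall>n. - (T n) \<in> Borel_Sigma (Suc (Suc 0))"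
    by (simp only: numeral_2_eq_2 simp_thms)
  then have "- S \<in> Borel_Sigma (Suc (Suc (Suc 0)))"
    by (subst Borel_Sigma.simps(3)) (use T(2) in blast)
  then show ?thesis by (simp add: Borel_Pi_def numeral_3_eq_3)
qed

lemma Sigma11_if_fsigma:
  assumes "fsigma_in euclidean S"
  shows "S \<in> Sigma11"
proof -
  obtain U where "countable U" "U \<subseteq> Collect closed" "S = \<Union>U"
    using assms unfolding fsigma_in_def union_of_def closed_closedin [symmetric] by blast
  then show ?thesis by (metis Sigma11_Union Sigma11_closed mem_Collect_eq subset_iff)
qed

lemma Sigma11_if_fsigma_delta:
  assumes "fsigma_delta S"
  shows "S \<in> Sigma11"
proof -
  obtain U where "countable U" "U \<subseteq> Collect (fsigma_in euclidean)" "S = \<Inter>U"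
    using assms unfolding intersection_of_def by blast
  then show ?thesis by (metis Sigma11_Inter Sigma11_if_fsigma mem_Collect_eq subset_iff)
qed

lemma fsigma_if_closed: "closed S \<Longrightarrow> fsigma_in euclidean S"
  using closed_imp_fsigma_in closed_closedin by blast

lemma fsigma_if_open:
  fixes S :: "'a::metric_space set"
  shows "open S \<Longrightarrow> fsigma_in euclidean S"
  using open_imp_fsigma_in[OF metrizable_space_euclidean] open_openin by blast

lemma Compl_Sigma11_if_fsigma:
  fixes S :: "'a::metric_space set"
  assumes "fsigma_in euclidean S"
  shows "- S \<in> Sigma11"
proof -
  obtain C where C: "\<And>n::nat. closed (C n)" "S = (\<Union>n. C n)"
    using assms unfolding fsigma_in_euclidean_iff by blast
  have "- C n \<in> Sigma11" for n
    using C(1)[of n] unfolding closed_def by (intro Sigma11_if_fsigma fsigma_if_open)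
  moreover have "- S = (\<Inter>n. - C n)" using C(2) by blast
  ultimately show ?thesis using Sigma11_INT by metis
qed

lemma Compl_Sigma11_if_fsigma_delta:
  fixes S :: "'a::metric_space set"
  assumes "fsigma_delta S"
  shows "- S \<in> Sigma11"
proof -
  obtain U where U: "countable U" "U \<subseteq> Collect (fsigma_in euclidean)" "S = \<Inter>U"
    using assms unfolding intersection_of_def by blast
  have "- S = \<Union>(uminus ` U)" using U(3) by blast
  moreover have "uminus ` U \<subseteq> Sigma11" using U(2) Compl_Sigma11_if_fsigma by blast
  ultimately show ?thesis by (metis Sigma11_Union U(1) countable_image)
qed

lemma fsigma_Collect_ex:
  "(\<And>i :: 'i::countable. fsigma_in euclidean {x. P i x}) \<Longrightarrow> fsigma_in euclidean {x. \<exists>i. P i x}"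
  using fsigma_in_Union[of "range (\<lambda>i. {x. P i x})" euclidean] by (auto simp: Collect_ex_eq)

lemma fsigma_delta_if_fsigma: "fsigma_in euclidean S \<Longrightarrow> fsigma_delta S"
  by (rule countable_intersection_of_inc)

lemma fsigma_delta_Collect_all:
  "(\<And>i :: 'i::countable. fsigma_delta {x. P i x}) \<Longrightarrow> fsigma_delta {x. \<forall>i. P i x}"
  using countable_intersection_of_INT[where I = UNIV and U = "\<lambda>i. {x. P i x}"] by (simp add: Collect_all_eq)

lemma fsigma_delta_Collect_conj:
  "fsigma_delta {x. P x} \<Longrightarrow> fsigma_delta {x. Q x} \<Longrightarrow> fsigma_delta {x. P x \<and> Q x}"
  using countable_intersection_of_inter by (auto simp: Collect_conj_eq)

lemma fsigma_delta_metric_on_nat: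
  fixes D :: "'a::metric_space \<Rightarrow> nmat"
  assumes "continuous_on UNIV D"
  shows "fsigma_delta {x. metric_on_nat (D x)}"
proof -
  have D: "continuous_on UNIV (\<lambda>x. D x (a, b))" for a b
    using assms by (rule continuous_on_product_then_coordinatewise)
  have zero_iff: "fsigma_in euclidean {x. (D x (a, b) = 0) = (a = b)}" for a b
  proof (cases "a = b")
    case True
    then show ?thesis by (simp add: fsigma_if_closed closed_Collect_eq D)
  next
    case False
    then show ?thesis by (simp add: fsigma_if_open open_Collect_neq D)
  qed
  then show ?thesis
    unfolding metric_on_nat_def
    by (intro fsigma_delta_Collect_conj fsigma_delta_Collect_all fsigma_delta_if_fsigma zero_iff
        fsigma_if_closed closed_Collect_le closed_Collect_eq continuous_intros D)
qed

section \<open>Borel complexity of metric notions on \<open>\<omega>\<close>\<close>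

lemma ex_inverse_Suc_less: "0 < (e::real) \<Longrightarrow> \<exists>k. 1 / real (Suc k) < e"
  using reals_Archimedean by (simp add: inverse_eq_divide)

lemma cauchy_in_iff_inverse_Suc:
  "cauchy_in d z \<longleftrightarrow> (\<forall>k. \<exists>N. \<forall>m\<ge>N. \<forall>n\<ge>N. d (z m, z n) \<le> 1 / real (Suc k))"
proof
  assume "cauchy_in d z"
  then show "\<forall>k. \<exists>N. \<forall>m\<ge>N. \<forall>n\<ge>N. d (z m, z n) \<le> 1 / real (Suc k)"
    unfolding cauchy_in_def by (metis less_imp_le of_nat_0_less_iff zero_less_Suc zero_less_divide_1_iff)
next
  assume H: "\<forall>k. \<exists>N. \<forall>m\<ge>N. \<forall>n\<ge>N. d (z m, z n) \<le> 1 / real (Suc k)"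
  show "cauchy_in d z"
    unfolding cauchy_in_def
  proof (intro allI impI)
    fix e :: real assume "0 < e"
    then obtain k where "1 / real (Suc k) < e" using ex_inverse_Suc_less by blast
    then show "\<exists>N. \<forall>m\<ge>N. \<forall>n\<ge>N. d (z m, z n) < e"
      using H by (meson order.strict_trans1)
  qed
qed

lemma fsigma_delta_cauchy_in:
  fixes D :: "'a::topological_space \<Rightarrow> nmat" and Z :: "'a \<Rightarrow> nseq"
  assumes D: "continuous_on UNIV D" and Z: "continuous_on UNIV Z"
  shows "fsigma_delta {x. cauchy_in (D x) (Z x)}"
proof -
  have cont: "continuous_on UNIV (\<lambda>x. D x (Z x m, Z x n))" for m n
    using continuous_on_product_then_coordinatewise[OF Z]
    by (intro continuous_on_apply_discrete[OF D] continuous_on_Pair)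
  have "closed {x. \<forall>m\<ge>N. \<forall>n\<ge>N. D x (Z x m, Z x n) \<le> c}" for N c
  proof -
    have "{x. \<forall>m\<ge>N. \<forall>n\<ge>N. D x (Z x m, Z x n) \<le> c}
        = (\<Inter>m\<in>{N..}. \<Inter>n\<in>{N..}. {x. D x (Z x m, Z x n) \<le> c})"
      by auto
    then show ?thesis by (auto intro!: closed_INT closed_Collect_le cont)
  qed
  then show ?thesis
    unfolding cauchy_in_iff_inverse_Suc
    by (intro fsigma_delta_Collect_all fsigma_delta_if_fsigma fsigma_Collect_ex fsigma_if_closed)
qed

lemma continuous_wrt_iff_inverse_Suc:
  "continuous_wrt d d' g \<longleftrightarrow>
     (\<forall>a k. \<exists>j. \<forall>b. d (a, b) < 1 / real (Suc j) \<longrightarrow> d' (g a, g b) \<le> 1 / real (Suc k))"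
proof
  assume H: "continuous_wrt d d' g"
  show "\<forall>a k. \<exists>j. \<forall>b. d (a, b) < 1 / real (Suc j) \<longrightarrow> d' (g a, g b) \<le> 1 / real (Suc k)"
  proof (intro allI)
    fix a k
    obtain \<delta> where "\<delta> > 0" and \<delta>: "\<And>b. d (a, b) < \<delta> \<Longrightarrow> d' (g a, g b) < 1 / real (Suc k)"
      using H unfolding continuous_wrt_def by (metis of_nat_0_less_iff zero_less_Suc zero_less_divide_1_iff)
    then obtain j where j: "1 / real (Suc j) < \<delta>" using ex_inverse_Suc_less by blast
    have "d' (g a, g b) \<le> 1 / real (Suc k)" if "d (a, b) < 1 / real (Suc j)" for b
      using \<delta>[of b] that j by linarith
    then show "\<exists>j. \<forall>b. d (a, b) < 1 / real (Suc j) \<longrightarrow> d' (g a, g b) \<le> 1 / real (Suc k)"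
      by blast
  qed
next
  assume H: "\<forall>a k. \<exists>j. \<forall>b. d (a, b) < 1 / real (Suc j) \<longrightarrow> d' (g a, g b) \<le> 1 / real (Suc k)"
  show "continuous_wrt d d' g"
    unfolding continuous_wrt_def
  proof (intro allI impI)
    fix a and e :: real assume "0 < e"
    then obtain k where k: "1 / real (Suc k) < e" using ex_inverse_Suc_less by blast
    obtain j where j: "\<And>b. d (a, b) < 1 / real (Suc j) \<Longrightarrow> d' (g a, g b) \<le> 1 / real (Suc k)"
      using H by blast
    have "d' (g a, g b) < e" if "d (a, b) < 1 / real (Suc j)" for b
      using j[OF that] k by linarith
    then show "\<exists>\<delta>>0. \<forall>b. d (a, b) < \<delta> \<longrightarrow> d' (g a, g b) < e"
      by (intro exI[of _ "1 / real (Suc j)"]) auto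
  qed
qed

lemma fsigma_delta_continuous_wrt:
  fixes D D' :: "'a::topological_space \<Rightarrow> nmat" and G :: "'a \<Rightarrow> nseq"
  assumes D: "continuous_on UNIV D" and D': "continuous_on UNIV D'" and G: "continuous_on UNIV G"
  shows "fsigma_delta {x. continuous_wrt (D x) (D' x) (G x)}"
proof -
  have "continuous_on UNIV (\<lambda>x. D x (a, b))" for a b
    using D by (rule continuous_on_product_then_coordinatewise)
  moreover have "continuous_on UNIV (\<lambda>x. D' x (G x a, G x b))" for a b
    using continuous_on_product_then_coordinatewise[OF G]
    by (intro continuous_on_apply_discrete[OF D'] continuous_on_Pair)
  ultimately show ?thesis
    unfolding continuous_wrt_iff_inverse_Suc
    by (intro fsigma_delta_Collect_all fsigma_delta_if_fsigma fsigma_Collect_ex fsigma_if_closed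
        closed_Collect_all closed_Collect_imp open_Collect_less closed_Collect_le continuous_on_const)
qed

lemma dense_isometry_iff_inverse_Suc:
  "dense_isometry d0 d1 \<iota> \<longleftrightarrow>
     (\<forall>a b. d1 (\<iota> a, \<iota> b) = d0 (a, b)) \<and> (\<forall>y k. \<exists>a. d1 (\<iota> a, y) \<le> 1 / real (Suc k))"
proof -
  have "(\<forall>e>0. \<exists>a. d1 (\<iota> a, y) < e) \<longleftrightarrow> (\<forall>k. \<exists>a. d1 (\<iota> a, y) \<le> 1 / real (Suc k))" for y
  proof
    assume "\<forall>e>0. \<exists>a. d1 (\<iota> a, y) < e"
    then show "\<forall>k. \<exists>a. d1 (\<iota> a, y) \<le> 1 / real (Suc k)"
      by (metis less_imp_le of_nat_0_less_iff zero_less_Suc zero_less_divide_1_iff)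
  next
    assume H: "\<forall>k. \<exists>a. d1 (\<iota> a, y) \<le> 1 / real (Suc k)"
    show "\<forall>e>0. \<exists>a. d1 (\<iota> a, y) < e"
    proof (intro allI impI)
      fix e :: real assume "0 < e"
      then obtain k where "1 / real (Suc k) < e" using ex_inverse_Suc_less by blast
      with H show "\<exists>a. d1 (\<iota> a, y) < e" by (meson order.strict_trans1)
    qed
  qed
  then show ?thesis unfolding dense_isometry_def by blast
qed

lemma fsigma_delta_dense_isometry:
  fixes D0 D1 :: "'a::topological_space \<Rightarrow> nmat" and I :: "'a \<Rightarrow> nseq"
  assumes D0: "continuous_on UNIV D0" and D1: "continuous_on UNIV D1" and I: "continuous_on UNIV I"
  shows "fsigma_delta {x. dense_isometry (D0 x) (D1 x) (I x)}"
proof -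
  have "continuous_on UNIV (\<lambda>x. D0 x (a, b))" for a b
    using D0 by (rule continuous_on_product_then_coordinatewise)
  moreover have "continuous_on UNIV (\<lambda>x. D1 x (I x a, I x b))" for a b
    using continuous_on_product_then_coordinatewise[OF I]
    by (intro continuous_on_apply_discrete[OF D1] continuous_on_Pair)
  moreover have "continuous_on UNIV (\<lambda>x. D1 x (I x a, y))" for a y
    using continuous_on_product_then_coordinatewise[OF I]
    by (intro continuous_on_apply_discrete[OF D1] continuous_on_Pair continuous_on_const)
  ultimately show ?thesis
    unfolding dense_isometry_iff_inverse_Suc
    by (intro fsigma_delta_Collect_conj fsigma_delta_Collect_all fsigma_delta_if_fsigma
        fsigma_Collect_ex fsigma_if_closed closed_Collect_eq closed_Collect_le continuous_on_const)
qed

lemma closed_commuting_square: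
  fixes I I' G0 G1 :: "'a::topological_space \<Rightarrow> nseq"
  assumes "continuous_on UNIV I" "continuous_on UNIV I'" "continuous_on UNIV G0" "continuous_on UNIV G1"
  shows "closed {x. I' x \<circ> G0 x = G1 x \<circ> I x}"
  using assms by (intro closed_Collect_eq continuous_on_comp_discrete)

section \<open>Cauchy continuity\<close>

lemma metric_on_nat_self: "metric_on_nat d \<Longrightarrow> d (x, x) = 0"
  and metric_on_nat_commute: "metric_on_nat d \<Longrightarrow> d (x, y) = d (y, x)"
  and metric_on_nat_triangle: "metric_on_nat d \<Longrightarrow> d (x, z) \<le> d (x, y) + d (y, z)"
  unfolding metric_on_nat_def by auto

lemma cauchy_in_if_close:
  assumes d: "metric_on_nat d" and u: "cauchy_in d u"
    and close: "\<And>n. d (u n, v n) \<le> 1 / real (Suc n)"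
  shows "cauchy_in d v"
  unfolding cauchy_in_def
proof (intro allI impI)
  fix e :: real assume "0 < e"
  then obtain K where K: "1 / real (Suc K) < e / 3" using ex_inverse_Suc_less[of "e / 3"] by auto
  obtain N where N: "\<And>m n. N \<le> m \<Longrightarrow> N \<le> n \<Longrightarrow> d (u m, u n) < e / 3"
    using u \<open>0 < e\<close> unfolding cauchy_in_def by (metis zero_less_divide_iff zero_less_numeral)
  have small: "d (u n, v n) < e / 3" if "K \<le> n" for n
  proof -
    have "1 / real (Suc n) \<le> 1 / real (Suc K)" using that by (simp add: frac_le)
    then show ?thesis using close[of n] K by linarith
  qed
  have "d (v m, v n) < e" if "max K N \<le> m" "max K N \<le> n" for m n
  proof -
    have "d (v m, v n) \<le> d (u m, v m) + d (u m, u n) + d (u n, v n)"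
      using metric_on_nat_triangle[OF d, of "v m" "v n" "u m"]
        metric_on_nat_triangle[OF d, of "u m" "v n" "u n"] metric_on_nat_commute[OF d, of "v m" "u m"]
      by linarith
    moreover have "d (u m, v m) < e / 3" "d (u n, v n) < e / 3" "d (u m, u n) < e / 3"
      using small N that by auto
    ultimately show ?thesis by linarith
  qed
  then show "\<exists>N. \<forall>m\<ge>N. \<forall>n\<ge>N. d (v m, v n) < e" by blast
qed

lemma continuous_wrt_if_cauchy_continuous:
  assumes d: "metric_on_nat d" and cc: "cauchy_continuous_wrt d d' g"
  shows "continuous_wrt d d' g"
  unfolding continuous_wrt_def
proof (intro allI impI, rule ccontr)
  fix y and e :: real
  assume "0 < e" and "\<not> (\<exists>\<delta>>0. \<forall>z. d (y, z) < \<delta> \<longrightarrow> d' (g y, g z) < e)"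
  then have "\<forall>n. \<exists>z. d (y, z) < 1 / real (Suc n) \<and> e \<le> d' (g y, g z)"
    by (metis not_less of_nat_0_less_iff zero_less_Suc zero_less_divide_1_iff)
  then obtain z where z: "\<And>n. d (y, z n) < 1 / real (Suc n)" "\<And>n. e \<le> d' (g y, g (z n))"
    by metis
  \<comment> \<open>interleaving \<open>y\<close> with \<open>z\<close> gives a Cauchy sequence whose image is not Cauchy\<close>
  define s where "s n = (if even n then y else z n)" for n
  have "cauchy_in d (\<lambda>_. y)"
    using metric_on_nat_self[OF d] by (auto simp: cauchy_in_def)
  moreover have "d (y, s n) \<le> 1 / real (Suc n)" for n
    using metric_on_nat_self[OF d, of y] z(1)[of n] by (simp add: s_def less_imp_le)
  ultimately have "cauchy_in d s" by (rule cauchy_in_if_close[OF d])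
  then obtain N where "\<forall>m\<ge>N. \<forall>n\<ge>N. d' (g (s m), g (s n)) < e"
    using cc \<open>0 < e\<close> unfolding cauchy_continuous_wrt_def cauchy_in_def by fastforce
  then have "d' (g (s (2 * N)), g (s (Suc (2 * N)))) < e" by simp
  then show False using z(2)[of "Suc (2 * N)"] by (simp add: s_def)
qed

lemma cauchy_in_comp_isometry:
  assumes "\<And>a b. d1 (\<iota> a, \<iota> b) = d0 (a, b)"
  shows "cauchy_in d1 (\<iota> \<circ> z) \<longleftrightarrow> cauchy_in d0 z"
  using assms unfolding cauchy_in_def by simp

definition graph_dense :: "nmat \<Rightarrow> nmat \<Rightarrow> nseq \<Rightarrow> nseq \<Rightarrow> bool" where
  "graph_dense d d' g \<iota> \<longleftrightarrow>
     (\<forall>y k. \<exists>a. d (\<iota> a, y) \<le> 1 / real (Suc k) \<and> d' (g (\<iota> a), g y) \<le> 1 / real (Suc k))"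

lemma graph_dense_if_cauchy_continuous:
  assumes d: "metric_on_nat d" and d': "metric_on_nat d'" and cc: "cauchy_continuous_wrt d d' g"
    and \<iota>: "dense_isometry d0 d \<iota>"
  shows "graph_dense d d' g \<iota>"
  unfolding graph_dense_def
proof (intro allI)
  fix y k
  define e where "e = 1 / real (Suc k)"
  have "0 < e" by (simp add: e_def)
  then obtain \<delta> where "0 < \<delta>" and \<delta>: "\<And>z. d (y, z) < \<delta> \<Longrightarrow> d' (g y, g z) < e"
    using continuous_wrt_if_cauchy_continuous[OF d cc] unfolding continuous_wrt_def by blast
  obtain a where a: "d (\<iota> a, y) < min \<delta> e"
    using \<iota> \<open>0 < \<delta>\<close> \<open>0 < e\<close> unfolding dense_isometry_def by (metis min_less_iff_conj)
  have "d' (g (\<iota> a), g y) < e"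
    using \<delta>[of "\<iota> a"] a metric_on_nat_commute[OF d] metric_on_nat_commute[OF d']
    by (metis min_less_iff_conj)
  with a show "\<exists>a. d (\<iota> a, y) \<le> e \<and> d' (g (\<iota> a), g y) \<le> e"
    by (metis less_imp_le min_less_iff_conj)
qed

lemma cauchy_continuous_if_graph_dense:
  assumes d: "metric_on_nat d" and d': "metric_on_nat d'"
    and cc0: "cauchy_continuous_wrt d0 d0' g0"
    and \<iota>: "\<And>a b. d (\<iota> a, \<iota> b) = d0 (a, b)" and \<iota>': "\<And>a b. d' (\<iota>' a, \<iota>' b) = d0' (a, b)"
    and square: "\<iota>' \<circ> g0 = g \<circ> \<iota>" and dense: "graph_dense d d' g \<iota>"
  shows "cauchy_continuous_wrt d d' g"
  unfolding cauchy_continuous_wrt_def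
proof (intro allI impI)
  fix z assume z: "cauchy_in d z"
  have "\<forall>n. \<exists>a. d (\<iota> a, z n) \<le> 1 / real (Suc n) \<and> d' (g (\<iota> a), g (z n)) \<le> 1 / real (Suc n)"
    using dense unfolding graph_dense_def by blast
  then obtain a where a: "\<And>n. d (\<iota> (a n), z n) \<le> 1 / real (Suc n)"
    "\<And>n. d' (g (\<iota> (a n)), g (z n)) \<le> 1 / real (Suc n)"
    by metis
  \<comment> \<open>follow \<open>z\<close> by a sequence in the image of \<open>\<iota>\<close>, on which \<open>g\<close> is Cauchy continuous by the commuting square\<close>
  have "d (z n, \<iota> (a n)) \<le> 1 / real (Suc n)" for n
    using a(1)[of n] metric_on_nat_commute[OF d] by metis
  then have "cauchy_in d (\<iota> \<circ> a)" using cauchy_in_if_close[OF d z] by (simp add: comp_def)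
  then have "cauchy_in d0' (g0 \<circ> a)"
    using cc0 cauchy_in_comp_isometry[of d \<iota> d0, OF \<iota>] unfolding cauchy_continuous_wrt_def by blast
  then have "cauchy_in d' (g \<circ> \<iota> \<circ> a)"
    using cauchy_in_comp_isometry[of d' \<iota>' d0', OF \<iota>'] square by (metis comp_assoc)
  then show "cauchy_in d' (g \<circ> z)"
    using cauchy_in_if_close[OF d'] a(2) by (simp add: comp_def)
qed

lemma fsigma_delta_graph_dense:
  fixes D D' :: "'a::topological_space \<Rightarrow> nmat" and G I :: "'a \<Rightarrow> nseq"
  assumes D: "continuous_on UNIV D" and D': "continuous_on UNIV D'"
    and G: "continuous_on UNIV G" and I: "continuous_on UNIV I"
  shows "fsigma_delta {x. graph_dense (D x) (D' x) (G x) (I x)}"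
proof -
  have "continuous_on UNIV (\<lambda>x. D x (I x a, y))" for a y
    using continuous_on_product_then_coordinatewise[OF I]
    by (intro continuous_on_apply_discrete[OF D] continuous_on_Pair continuous_on_const)
  moreover have "continuous_on UNIV (\<lambda>x. D' x (G x (I x a), G x y))" for a y
    using continuous_on_product_then_coordinatewise[OF I] continuous_on_product_then_coordinatewise[OF G]
    by (intro continuous_on_apply_discrete[OF D'] continuous_on_Pair continuous_on_apply_discrete[OF G]
        continuous_on_const)
  ultimately show ?thesis
    unfolding graph_dense_def
    by (intro fsigma_delta_Collect_all fsigma_delta_if_fsigma fsigma_Collect_ex fsigma_if_closed
        closed_Collect_conj closed_Collect_le continuous_on_const)
qed

lemma Borel_Pi_3_cauchy_in:
  "({(z, d). metric_on_nat d \<and> cauchy_in d z} :: (nseq \<times> nmat) set) \<in> Borel_Pi 3"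
proof -
  have "fsigma_delta {p :: nseq \<times> nmat. metric_on_nat (snd p) \<and> cauchy_in (snd p) (fst p)}"
    by (intro fsigma_delta_Collect_conj fsigma_delta_metric_on_nat fsigma_delta_cauchy_in
        continuous_on_fst continuous_on_snd continuous_on_id)
  then show ?thesis by (simp add: case_prod_unfold Borel_Pi_3_if_fsigma_delta)
qed

lemma Borel_Pi_3_continuous_wrt:
  "({(g, d, d'). metric_on_nat d \<and> metric_on_nat d' \<and> continuous_wrt d d' g}
      :: (nseq \<times> nmat \<times> nmat) set) \<in> Borel_Pi 3"
proof -
  have "fsigma_delta {p :: nseq \<times> nmat \<times> nmat. metric_on_nat (fst (snd p)) \<and>
      metric_on_nat (snd (snd p)) \<and> continuous_wrt (fst (snd p)) (snd (snd p)) (fst p)}"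
    by (intro fsigma_delta_Collect_conj fsigma_delta_metric_on_nat fsigma_delta_continuous_wrt
        continuous_on_fst continuous_on_snd continuous_on_id)
  then show ?thesis by (simp add: case_prod_unfold Borel_Pi_3_if_fsigma_delta)
qed

lemma Pi11_C_omega: "C_omega \<in> Pi11"
proof -
  let ?E = "{p :: (nseq \<times> nmat \<times> nmat) \<times> nseq. cauchy_in (fst (snd (fst p))) (snd p)}
    \<inter> - {p. cauchy_in (snd (snd (fst p))) (fst (fst p) \<circ> snd p)}"
  have "?E \<in> Sigma11"
    by (intro Sigma11_Int Sigma11_if_fsigma_delta Compl_Sigma11_if_fsigma_delta fsigma_delta_cauchy_in
        continuous_on_comp_discrete continuous_on_fst continuous_on_snd continuous_on_id)
  then have "fst ` ?E \<in> Sigma11" by (rule Sigma11_fst_image)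
  moreover have "- {x :: nseq \<times> nmat \<times> nmat. metric_on_nat (fst (snd x))} \<in> Sigma11"
    and "- {x :: nseq \<times> nmat \<times> nmat. metric_on_nat (snd (snd x))} \<in> Sigma11"
    by (intro Compl_Sigma11_if_fsigma_delta fsigma_delta_metric_on_nat continuous_on_fst
        continuous_on_snd continuous_on_id)+
  moreover have "- C_omega = - {x. metric_on_nat (fst (snd x))} \<union> - {x. metric_on_nat (snd (snd x))} \<union> fst ` ?E"
    by (auto simp: C_omega_def cauchy_continuous_wrt_def mem_fst_image_iff)
  ultimately show ?thesis unfolding Pi11_def by (simp add: Sigma11_Un)
qed

definition rel_left :: "(nseq \<times> nseq) \<times> nmat \<times> nmat \<times> nmat \<times> nmat \<Rightarrow> nseq \<times> nmat \<times> nmat" where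
  "rel_left = (\<lambda>((g0, g1), (d0, d0', d1, d1')). (g0, d0, d0'))"

definition rel_right :: "(nseq \<times> nseq) \<times> nmat \<times> nmat \<times> nmat \<times> nmat \<Rightarrow> nseq \<times> nmat \<times> nmat" where
  "rel_right = (\<lambda>((g0, g1), (d0, d0', d1, d1')). (g1, d1, d1'))"

lemma rel_set_eq: "rel_set R = {x. R (rel_left x) (rel_right x)}"
  by (auto simp: rel_set_def rel_left_def rel_right_def)

lemma continuous_on_rel_left: "continuous_on UNIV rel_left"
  and continuous_on_rel_right: "continuous_on UNIV rel_right"
  unfolding rel_left_def rel_right_def case_prod_unfold by (intro continuous_intros)+

lemma Pi11_rel_set_C_omega: "rel_set (\<lambda>p q. p \<in> C_omega \<and> q \<in> C_omega) \<in> Pi11"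
proof -
  have "- rel_set (\<lambda>p q. p \<in> C_omega \<and> q \<in> C_omega) = rel_left -` (- C_omega) \<union> rel_right -` (- C_omega)"
    by (auto simp: rel_set_eq)
  then show ?thesis
    using Sigma11_Un[OF Sigma11_vimage[OF continuous_on_rel_left] Sigma11_vimage[OF continuous_on_rel_right]]
      Pi11_C_omega
    by (simp add: Pi11_def)
qed

definition cdi_embedding :: "nseq \<times> nmat \<times> nmat \<Rightarrow> nseq \<times> nmat \<times> nmat \<Rightarrow> nseq \<times> nseq \<Rightarrow> bool" where
  "cdi_embedding p q \<iota>s \<longleftrightarrow> (case (p, q, \<iota>s) of ((g0, d0, d0'), (g1, d1, d1'), (\<iota>, \<iota>')) \<Rightarrow>
     dense_isometry d0 d1 \<iota> \<and> dense_isometry d0' d1' \<iota>' \<and> \<iota>' \<circ> g0 = g1 \<circ> \<iota>)"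

lemma cdi_le_iff: "cdi_le p q \<longleftrightarrow> p \<in> C_omega \<and> q \<in> C_omega \<and> (\<exists>\<iota>s. cdi_embedding p q \<iota>s)"
  by (auto simp: cdi_le_def cdi_embedding_def split: prod.splits)

lemma fsigma_delta_cdi_embedding:
  fixes P Q :: "'a::topological_space \<Rightarrow> nseq \<times> nmat \<times> nmat" and Is :: "'a \<Rightarrow> nseq \<times> nseq"
  assumes "continuous_on UNIV P" "continuous_on UNIV Q" "continuous_on UNIV Is"
  shows "fsigma_delta {x. cdi_embedding (P x) (Q x) (Is x)}"
  unfolding cdi_embedding_def case_prod_unfold fst_conv snd_conv
  using assms
  by (intro fsigma_delta_Collect_conj fsigma_delta_dense_isometry fsigma_delta_if_fsigma
      fsigma_if_closed closed_commuting_square continuous_on_fst continuous_on_snd)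

lemma cdi_le_Sigma11_Int_Pi11: "\<exists>S P. S \<in> Sigma11 \<and> P \<in> Pi11 \<and> rel_set cdi_le = S \<inter> P"
proof (intro exI conjI)
  let ?E = "{p. cdi_embedding (rel_left (fst p)) (rel_right (fst p)) (snd p)}"
  show "fst ` ?E \<in> Sigma11"
    by (intro Sigma11_fst_image Sigma11_if_fsigma_delta fsigma_delta_cdi_embedding
        continuous_on_compose2[OF continuous_on_rel_left] continuous_on_compose2[OF continuous_on_rel_right]
        continuous_on_fst continuous_on_snd continuous_on_id subset_UNIV)
  show "rel_set (\<lambda>p q. p \<in> C_omega \<and> q \<in> C_omega) \<in> Pi11" by (rule Pi11_rel_set_C_omega)
  show "rel_set cdi_le = fst ` ?E \<inter> rel_set (\<lambda>p q. p \<in> C_omega \<and> q \<in> C_omega)"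
    by (auto simp: rel_set_eq cdi_le_iff mem_fst_image_iff) blast+
qed

lemma cdi_approx_iff:
  "cdi_approx p q \<longleftrightarrow> p \<in> C_omega \<and> q \<in> C_omega \<and>
     (\<exists>g d d' \<iota>s \<kappa>s. metric_on_nat d \<and> metric_on_nat d' \<and> cdi_embedding p (g, d, d') \<iota>s \<and>
        cdi_embedding q (g, d, d') \<kappa>s \<and> graph_dense d d' g (fst \<iota>s))"
  (is "_ \<longleftrightarrow> ?C p \<and> ?C q \<and> ?witness")
proof
  assume "cdi_approx p q"
  then obtain g d d' \<iota>s \<kappa>s where "?C p" "?C q" and r: "(g, d, d') \<in> C_omega"
    and \<iota>s: "cdi_embedding p (g, d, d') \<iota>s" and \<kappa>s: "cdi_embedding q (g, d, d') \<kappa>s"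
    unfolding cdi_approx_def cdi_le_iff by auto
  have d: "metric_on_nat d" "metric_on_nat d'" and cc: "cauchy_continuous_wrt d d' g"
    using r by (auto simp: C_omega_def)
  have "dense_isometry (fst (snd p)) d (fst \<iota>s)"
    using \<iota>s by (auto simp: cdi_embedding_def split: prod.splits)
  then have "graph_dense d d' g (fst \<iota>s)" by (rule graph_dense_if_cauchy_continuous[OF d cc])
  with \<open>?C p\<close> \<open>?C q\<close> d \<iota>s \<kappa>s show "?C p \<and> ?C q \<and> ?witness" by blast
next
  assume "?C p \<and> ?C q \<and> ?witness"
  then obtain g d d' \<iota>s \<kappa>s where "?C p" "?C q" and d: "metric_on_nat d" "metric_on_nat d'"
    and \<iota>s: "cdi_embedding p (g, d, d') \<iota>s" and \<kappa>s: "cdi_embedding q (g, d, d') \<kappa>s"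
    and dense: "graph_dense d d' g (fst \<iota>s)"
    by blast
  obtain g0 d0 d0' \<iota> \<iota>' where p: "p = (g0, d0, d0')" and \<iota>s_eq: "\<iota>s = (\<iota>, \<iota>')"
    by (cases p, cases \<iota>s) auto
  have cc0: "cauchy_continuous_wrt d0 d0' g0"
    using \<open>?C p\<close> by (simp add: p C_omega_def)
  have "dense_isometry d0 d \<iota>" "dense_isometry d0' d' \<iota>'" "\<iota>' \<circ> g0 = g \<circ> \<iota>"
    using \<iota>s by (simp_all add: p \<iota>s_eq cdi_embedding_def)
  then have "cauchy_continuous_wrt d d' g"
    using dense
    by (intro cauchy_continuous_if_graph_dense[OF d cc0, of \<iota> \<iota>']) (simp_all add: dense_isometry_def \<iota>s_eq)
  with d have "(g, d, d') \<in> C_omega" by (simp add: C_omega_def)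
  with \<open>?C p\<close> \<open>?C q\<close> \<iota>s \<kappa>s show "cdi_approx p q"
    unfolding cdi_approx_def cdi_le_iff by blast
qed

lemma cdi_approx_Sigma11_Int_Pi11: "\<exists>S P. S \<in> Sigma11 \<and> P \<in> Pi11 \<and> rel_set cdi_approx = S \<inter> P"
proof (intro exI conjI)
  let ?E = "{p :: _ \<times> (nseq \<times> nmat \<times> nmat) \<times> (nseq \<times> nseq) \<times> (nseq \<times> nseq).
    case snd p of ((g, d, d'), \<iota>s, \<kappa>s) \<Rightarrow> metric_on_nat d \<and> metric_on_nat d' \<and>
      cdi_embedding (rel_left (fst p)) (g, d, d') \<iota>s \<and> cdi_embedding (rel_right (fst p)) (g, d, d') \<kappa>s \<and>
      graph_dense d d' g (fst \<iota>s)}"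
  have "fsigma_delta ?E"
    unfolding case_prod_unfold
    by (intro fsigma_delta_Collect_conj fsigma_delta_metric_on_nat fsigma_delta_cdi_embedding
        fsigma_delta_graph_dense continuous_on_compose2[OF continuous_on_rel_left]
        continuous_on_compose2[OF continuous_on_rel_right] continuous_on_Pair
        continuous_on_fst continuous_on_snd continuous_on_id subset_UNIV)
  then show "fst ` ?E \<in> Sigma11" by (intro Sigma11_fst_image Sigma11_if_fsigma_delta)
  show "rel_set (\<lambda>p q. p \<in> C_omega \<and> q \<in> C_omega) \<in> Pi11" by (rule Pi11_rel_set_C_omega)
  show "rel_set cdi_approx = fst ` ?E \<inter> rel_set (\<lambda>p q. p \<in> C_omega \<and> q \<in> C_omega)"
    by (auto simp: rel_set_eq cdi_approx_iff mem_fst_image_iff) blast+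
qed

theorem theorem4p6:
  shows "(({(z, d). metric_on_nat d \<and> cauchy_in d z} :: (nseq \<times> nmat) set) \<in> Borel_Pi 3)
    \<and> (({(g, d, d'). metric_on_nat d \<and> metric_on_nat d' \<and> continuous_wrt d d' g}
            :: (nseq \<times> nmat \<times> nmat) set) \<in> Borel_Pi 3)
    \<and> C_omega \<in> Pi11
    \<and> (\<exists>S P. S \<in> Sigma11 \<and> P \<in> Pi11 \<and> rel_set cdi_le = S \<inter> P)
    \<and> (\<exists>S P. S \<in> Sigma11 \<and> P \<in> Pi11 \<and> rel_set cdi_approx = S \<inter> P)"
  using Borel_Pi_3_cauchy_in Borel_Pi_3_continuous_wrt Pi11_C_omega
    cdi_le_Sigma11_Int_Pi11 cdi_approx_Sigma11_Int_Pi11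
  by blast

end
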